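(* Let $\mathcal{A}$ be a central and essential arrangement in $\mathbb{Q}^l$ as in the context, let $\sigma$ be a term ordering, $p$ a prime, and $1\le i<j\le n$. If $(\alpha_i)_p=\beta(\alpha_j)_p$ for some $\beta\in\mathbb{F}_p\setminus\{0\}$, then $p$ is not $\sigma$-lucky for the ideal $\langle\alpha_i,\alpha_j\rangle\subseteq\mathbb{Z}[x_1,\dots,x_l]$.
   Context: $\mathcal{A}=\{H_1,\dots,H_n\}$: $n$ distinct linear hyperplanes in $\mathbb{Q}^l$ with $\bigcap H_i=\{0\}$, $H_i=\{\alpha_i=0\}$, $\alpha_i\in\mathbb{Z}[x_1,\dots,x_l]$ a nonzero linear form whose coefficients are not all divisible by any prime (so $\alpha_i,\alpha_j$ are not scalar multiples of one another for $i\ne j$). $(\alpha_i)_p$ is the reduction of $\alpha_i$ mod $p$. For a term ordering $\sigma$ and nonzero $f\in\mathbb{Z}[x_1,\dots,x_l]$, $\mathrm{LT}_\sigma(f)$ is the $\sigma$-largest term, $\mathrm{LC}_\sigma(f)$ its coefficient, $\mathrm{LM}_\sigma(f)=\mathrm{LC}_\sigma(f)\mathrm{LT}_\sigma(f)$. A minimal strong $\sigma$-Gröbner basis of an ideal $I\subseteq\mathbb{Z}[x_1,\dots,x_l]$ is a finite generating set $G$ of nonzero elements of $I$ such that every nonzero $f\in I$ has $\mathrm{LM}_\sigma(f)$ divisible by some $\mathrm{LM}_\sigma(g)$, $g\in G$, and no $\mathrm{LM}_\sigma(g)$ divides $\mathrm{LM}_\sigma(g')$ for distinct $g,g'\in G$;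 the set of leading coefficients is independent of the choice. $p$ is $\sigma$-lucky for $I$ if $p$ divides none of these leading coefficients. *)

theory Defs
  imports Complex_Main "HOL-Library.Poly_Mapping" "HOL-Computational_Algebra.Primes"
begin

text \<open>Variable x_k of the paper (1 <= k <= l) is represented by index k-1 < l.\<close>

type_synonym mon = "nat \<Rightarrow>\<^sub>0 nat"
type_synonym zpoly = "mon \<Rightarrow>\<^sub>0 int"

definition mons :: "nat \<Rightarrow> mon set" where
  "mons l = {m. Poly_Mapping.keys m \<subseteq> {..<l}}"

definition zring :: "nat \<Rightarrow> zpoly set" where
  "zring l = {f. Poly_Mapping.keys f \<subseteq> mons l}"

definition poly_ideal :: "nat \<Rightarrow> zpoly set \<Rightarrow> zpoly set" where
  "poly_ideal l S = {(\<Sum>s\<in>F. c s * s) | F c. finite F \<and> F \<subseteq> S \<and> (\<forall>s\<in>F. c s \<in> zring l)}"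

definition term_order :: "nat \<Rightarrow> (mon \<Rightarrow> mon \<Rightarrow> bool) \<Rightarrow> bool" where
  "term_order l le \<longleftrightarrow>
     (\<forall>m\<in>mons l. le m m) \<and>
     (\<forall>m\<in>mons l. \<forall>m'\<in>mons l. le m m' \<and> le m' m \<longrightarrow> m = m') \<and>
     (\<forall>m\<in>mons l. \<forall>m'\<in>mons l. \<forall>m''\<in>mons l. le m m' \<and> le m' m'' \<longrightarrow> le m m'') \<and>
     (\<forall>m\<in>mons l. \<forall>m'\<in>mons l. le m m' \<or> le m' m) \<and>
     (\<forall>m\<in>mons l. le 0 m) \<and>
     (\<forall>m\<in>mons l. \<forall>m'\<in>mons l. \<forall>k\<in>mons l. le m m' \<longrightarrow> le (m + k) (m' + k))"

definition lt :: "(mon \<Rightarrow> mon \<Rightarrow> bool) \<Rightarrow> zpoly \<Rightarrow> mon" where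
  "lt le f = (THE m. m \<in> Poly_Mapping.keys f \<and> (\<forall>m'\<in>Poly_Mapping.keys f. le m' m))"

definition lc :: "(mon \<Rightarrow> mon \<Rightarrow> bool) \<Rightarrow> zpoly \<Rightarrow> int" where
  "lc le f = Poly_Mapping.lookup f (lt le f)"

definition mon_dvd :: "mon \<Rightarrow> mon \<Rightarrow> bool" where
  "mon_dvd m m' \<longleftrightarrow> (\<forall>v. Poly_Mapping.lookup m v \<le> Poly_Mapping.lookup m' v)"

definition lm_dvd :: "(mon \<Rightarrow> mon \<Rightarrow> bool) \<Rightarrow> zpoly \<Rightarrow> zpoly \<Rightarrow> bool" where
  "lm_dvd le g f \<longleftrightarrow> lc le g dvd lc le f \<and> mon_dvd (lt le g) (lt le f)"

definition min_strong_GB :: "nat \<Rightarrow> (mon \<Rightarrow> mon \<Rightarrow> bool) \<Rightarrow> zpoly set \<Rightarrow> zpoly set \<Rightarrow> bool" where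
  "min_strong_GB l le I G \<longleftrightarrow>
     finite G \<and> G \<subseteq> I - {0} \<and> poly_ideal l G = I \<and>
     (\<forall>f\<in>I. f \<noteq> 0 \<longrightarrow> (\<exists>g\<in>G. lm_dvd le g f)) \<and>
     (\<forall>g\<in>G. \<forall>g'\<in>G. g \<noteq> g' \<longrightarrow> \<not> lm_dvd le g g')"

definition lucky :: "nat \<Rightarrow> (mon \<Rightarrow> mon \<Rightarrow> bool) \<Rightarrow> zpoly set \<Rightarrow> int \<Rightarrow> bool" where
  "lucky l le I p \<longleftrightarrow> (\<forall>G. min_strong_GB l le I G \<longrightarrow> (\<forall>g\<in>G. \<not> p dvd lc le g))"

text \<open>The integral linear form with coefficient vector a (a k = coefficient of x_{k+1}).\<close>
definition lin_form :: "nat \<Rightarrow> (nat \<Rightarrow> int) \<Rightarrow> zpoly" where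
  "lin_form l a = (\<Sum>k<l. Poly_Mapping.single (Poly_Mapping.single k 1) (a k))"

definition hyperplane :: "nat \<Rightarrow> (nat \<Rightarrow> int) \<Rightarrow> (nat \<Rightarrow> rat) set" where
  "hyperplane l a = {x. (\<forall>k\<ge>l. x k = 0) \<and> (\<Sum>k<l. of_int (a k) * x k) = 0}"

end

theory Submission
  imports Defs "HOL-Library.Ramsey"
begin

(* If p is lucky for I = <alpha_i, alpha_j>, then p divides no leading coefficient of a minimal
   strong Groebner basis G of I, and reducing by G with all quotients kept divisible by p shows
   that every element of I whose coefficients are all divisible by p is p times an element of I.
   Apply this to alpha_i - beta alpha_j: its linear part is then p (X alpha_i + Y alpha_j), so
   (1 - pX) alpha_i = (beta + pY) alpha_j with 1 - pX nonzero, and the two hyperplanes coincide.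
   Existence of G (needed, since luckiness quantifies over all such G) follows from Dickson's
   lemma applied to the pairs (|LC f|, LT f) of elements of I. *)

section \<open>Dickson's lemma\<close>

lemma infinite_subset_mono:
  fixes g :: "nat \<Rightarrow> nat"
  assumes "infinite S"
  shows "\<exists>Y\<subseteq>S. infinite Y \<and> (\<forall>x\<in>Y. \<forall>y\<in>Y. x < y \<longrightarrow> g x \<le> g y)"
proof -
  define colour where "colour X = (if g (Min X) \<le> g (Max X) then 0 else 1 :: nat)" for X
  have colour: "colour {x, y} = (if g x \<le> g y then 0 else 1)" if "x < y" for x y
    using that by (simp add: colour_def min_def max_def)
  have "\<forall>x\<in>S. \<forall>y\<in>S. x \<noteq> y \<longrightarrow> colour {x, y} < 2"
    by (simp add: colour_def)
  from Ramsey2[OF assms this] obtain Y t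
    where Y: "Y \<subseteq> S" "infinite Y" "\<forall>x\<in>Y. \<forall>y\<in>Y. x \<noteq> y \<longrightarrow> colour {x, y} = t"
    by (elim exE conjE)
  have colour_Y: "colour {x, y} = t" if "x \<in> Y" "y \<in> Y" "x < y" for x y
    using Y(3) that by simp
  have "t = 0"
  proof (rule ccontr)
    assume "t \<noteq> 0"
    obtain y0 where "y0 \<in> Y" using infinite_imp_nonempty[OF Y(2)] by blast
    then obtain x where x: "x \<in> Y" "\<forall>y\<in>Y. g x \<le> g y"
      using ex_has_least_nat[of "\<lambda>x. x \<in> Y" y0 g] by blast
    obtain y where y: "y \<in> Y" "x < y"
      using Y(2) unfolding infinite_nat_iff_unbounded by blast
    have "g x \<le> g y" using x(2) y(1) by simp
    then have "colour {x, y} = 0" using colour[OF y(2)] by simp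
    then show False using colour_Y[OF x(1) y] \<open>t \<noteq> 0\<close> by simp
  qed
  then have "g x \<le> g y" if "x \<in> Y" "y \<in> Y" "x < y" for x y
    using colour_Y[OF that] colour[OF that(3)] by (simp split: if_splits)
  with Y(1,2) show ?thesis by blast
qed

lemma dickson_infinite_subset:
  fixes s :: "nat \<Rightarrow> 'a \<Rightarrow> nat"
  assumes "finite V" "infinite S"
  shows "\<exists>Y\<subseteq>S. infinite Y \<and> (\<forall>x\<in>Y. \<forall>y\<in>Y. x < y \<longrightarrow> (\<forall>v\<in>V. s x v \<le> s y v))"
  using assms
proof (induction V arbitrary: S rule: finite_induct)
  case empty
  then show ?case by blast
next
  case (insert w V)
  obtain Y where Y: "Y \<subseteq> S" "infinite Y" "\<forall>x\<in>Y. \<forall>y\<in>Y. x < y \<longrightarrow> (\<forall>v\<in>V. s x v \<le> s y v)"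
    using insert.IH[OF insert.prems] by blast
  obtain Z where Z: "Z \<subseteq> Y" "infinite Z" "\<forall>x\<in>Z. \<forall>y\<in>Z. x < y \<longrightarrow> s x w \<le> s y w"
    using infinite_subset_mono[OF Y(2), of "\<lambda>x. s x w"] by blast
  have "\<forall>x\<in>Z. \<forall>y\<in>Z. x < y \<longrightarrow> (\<forall>v\<in>insert w V. s x v \<le> s y v)"
    using Y(3) Z(1,3) by blast
  with Y(1) Z(1,2) show ?case by blast
qed

corollary dickson:
  fixes s :: "nat \<Rightarrow> 'a \<Rightarrow> nat"
  assumes "finite V"
  obtains i j where "i < j" "\<forall>v\<in>V. s i v \<le> s j v"
proof -
  obtain Y where Y: "infinite Y" "\<forall>x\<in>Y. \<forall>y\<in>Y. x < y \<longrightarrow> (\<forall>v\<in>V. s x v \<le> s y v)"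
    using dickson_infinite_subset[OF assms infinite_UNIV_nat, of s] by auto
  obtain i where i: "i \<in> Y" using infinite_imp_nonempty[OF Y(1)] by blast
  obtain j where j: "j \<in> Y" "i < j" using Y(1) unfolding infinite_nat_iff_unbounded by blast
  have "\<forall>v\<in>V. s i v \<le> s j v" using Y(2) i j by blast
  with j(2) show ?thesis by (rule that)
qed

section \<open>Monomials, polynomials and ideals\<close>

lemma lookup_single_zero_mult:
  fixes g :: zpoly
  shows "Poly_Mapping.lookup (Poly_Mapping.single 0 c * g) x = c * Poly_Mapping.lookup g x"
  by (simp add: lookup_mult lookup_single when_mult mult_when Sum_any_right_distrib)

lemma lookup_single_mult_add:
  fixes g :: zpoly
  shows "Poly_Mapping.lookup (Poly_Mapping.single t c * g) (t + x) = c * Poly_Mapping.lookup g x"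
  by (simp add: lookup_mult lookup_single when_mult mult_when Sum_any_right_distrib)

lemma mon_add_eq_0_iff: "(a + b = (0::mon)) \<longleftrightarrow> a = 0 \<and> b = 0"
proof
  assume "a + b = 0"
  then have "Poly_Mapping.lookup a v = 0 \<and> Poly_Mapping.lookup b v = 0" for v
    by (metis add_is_0 lookup_add lookup_zero)
  then show "a = 0 \<and> b = 0" by (simp add: poly_mapping_eqI)
qed simp

lemma lookup_mult_zero:
  fixes f g :: zpoly
  shows "Poly_Mapping.lookup (f * g) 0 = Poly_Mapping.lookup f 0 * Poly_Mapping.lookup g 0"
proof -
  have "Sum_any (\<lambda>q. Poly_Mapping.lookup g q when 0 = a + q) = (Poly_Mapping.lookup g 0 when a = 0)"
    for a
    by (cases "a = 0") (simp_all add: mon_add_eq_0_iff eq_commute[of 0])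
  then show ?thesis by (simp add: lookup_mult mult_when)
qed

lemma add_eq_single_one_iff:
  "(a + b = Poly_Mapping.single v (1::nat)) \<longleftrightarrow>
     (a = 0 \<and> b = Poly_Mapping.single v 1) \<or> (a = Poly_Mapping.single v 1 \<and> b = 0)"
proof
  assume sum: "a + b = Poly_Mapping.single v 1"
  then have off: "Poly_Mapping.lookup a w = 0 \<and> Poly_Mapping.lookup b w = 0" if "w \<noteq> v" for w
    using that by (metis add_is_0 lookup_add lookup_single_not_eq)
  have "Poly_Mapping.lookup a v + Poly_Mapping.lookup b v = 1"
    using sum by (metis lookup_add lookup_single_eq)
  then consider "Poly_Mapping.lookup a v = 0" "Poly_Mapping.lookup b v = 1"
    | "Poly_Mapping.lookup a v = 1" "Poly_Mapping.lookup b v = 0"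
    by linarith
  then show "(a = 0 \<and> b = Poly_Mapping.single v 1) \<or> (a = Poly_Mapping.single v 1 \<and> b = 0)"
  proof cases
    case 1
    have "a = 0" by (rule poly_mapping_eqI) (metis 1(1) off lookup_zero)
    moreover have "b = Poly_Mapping.single v 1"
      by (rule poly_mapping_eqI) (metis 1(2) off lookup_single_eq lookup_single_not_eq)
    ultimately show ?thesis by simp
  next
    case 2
    have "a = Poly_Mapping.single v 1"
      by (rule poly_mapping_eqI) (metis 2(1) off lookup_single_eq lookup_single_not_eq)
    moreover have "b = 0" by (rule poly_mapping_eqI) (metis 2(2) off lookup_zero)
    ultimately show ?thesis by simp
  qed
qed auto

lemma single_one_neq_zero: "Poly_Mapping.single (k::nat) (1::nat) \<noteq> 0"
  by (metis lookup_single_eq lookup_zero one_neq_zero)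

lemma lookup_mult_single_one:
  fixes f g :: zpoly
  assumes "Poly_Mapping.lookup g 0 = 0"
  shows "Poly_Mapping.lookup (f * g) (Poly_Mapping.single v 1) =
    Poly_Mapping.lookup f 0 * Poly_Mapping.lookup g (Poly_Mapping.single v 1)"
proof -
  let ?e = "Poly_Mapping.single v (1::nat)"
  have "Sum_any (\<lambda>q. Poly_Mapping.lookup g q when ?e = a + q) = (Poly_Mapping.lookup g ?e when a = 0)"
    for a
  proof (cases "a = 0 \<or> a = ?e")
    case True
    then show ?thesis using assms single_one_neq_zero by (auto simp: eq_commute[of ?e])
  next
    case False
    then have "(Poly_Mapping.lookup g q when ?e = a + q) = 0" for q
      using add_eq_single_one_iff[of a q v] by (auto simp: eq_commute[of ?e])
    with False show ?thesis by simp
  qed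
  then show ?thesis by (simp add: lookup_mult mult_when)
qed

lemma zero_mons [simp]: "0 \<in> mons l"
  unfolding mons_def by simp

lemma mons_add: "m \<in> mons l \<Longrightarrow> m' \<in> mons l \<Longrightarrow> m + m' \<in> mons l"
  unfolding mons_def using keys_add[of m m'] by auto

lemma lookup_mons: "m \<in> mons l \<Longrightarrow> l \<le> v \<Longrightarrow> Poly_Mapping.lookup m v = 0"
  unfolding mons_def by (auto simp: in_keys_iff)

lemma mons_diff:
  assumes "m \<in> mons l" shows "m - m' \<in> mons l"
proof -
  have "Poly_Mapping.keys (m - m') \<subseteq> Poly_Mapping.keys m"
    by (auto simp: in_keys_iff lookup_minus)
  with assms show ?thesis unfolding mons_def by blast
qed

lemma mon_dvd_refl: "mon_dvd m m"
  unfolding mon_dvd_def by simp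

lemma mon_dvd_trans: "mon_dvd a b \<Longrightarrow> mon_dvd b c \<Longrightarrow> mon_dvd a c"
  unfolding mon_dvd_def using order_trans by blast

lemma mon_dvd_add_diff: "mon_dvd m m' \<Longrightarrow> m' = m + (m' - m)"
  unfolding mon_dvd_def by (intro poly_mapping_eqI) (simp add: lookup_add lookup_minus)

lemma mon_dvd_mons:
  assumes "mon_dvd m' m" "m \<in> mons l" shows "m' \<in> mons l"
proof -
  have "Poly_Mapping.keys m' \<subseteq> Poly_Mapping.keys m"
    using assms(1) unfolding mon_dvd_def by (auto simp: in_keys_iff) (metis less_le_trans)
  with assms(2) show ?thesis unfolding mons_def by blast
qed

lemma zring_single: "m \<in> mons l \<Longrightarrow> Poly_Mapping.single m c \<in> zring l"
  unfolding zring_def by auto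

lemma zring_add: "f \<in> zring l \<Longrightarrow> g \<in> zring l \<Longrightarrow> f + g \<in> zring l"
  unfolding zring_def using keys_add[of f g] by auto

lemma zring_diff: "f \<in> zring l \<Longrightarrow> g \<in> zring l \<Longrightarrow> f - g \<in> zring l"
  using zring_add[of f l "- g"] by (simp add: zring_def)

lemma zring_mult: "f \<in> zring l \<Longrightarrow> g \<in> zring l \<Longrightarrow> f * g \<in> zring l"
  unfolding zring_def using keys_mult[of f g] mons_add by blast

lemma zring_0 [simp]: "0 \<in> zring l"
  unfolding zring_def by simp

lemma zring_sum: "(\<And>x. x \<in> F \<Longrightarrow> h x \<in> zring l) \<Longrightarrow> sum h F \<in> zring l"
  by (induction F rule: infinite_finite_induct) (simp_all add: zring_add)

lemma poly_idealI:
  "finite F \<Longrightarrow> F \<subseteq> S \<Longrightarrow> \<forall>s\<in>F. c s \<in> zring l \<Longrightarrow> (\<Sum>s\<in>F. c s * s) \<in> poly_ideal l S"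
  unfolding poly_ideal_def by blast

lemma poly_idealE:
  assumes "f \<in> poly_ideal l S"
  obtains F c where "f = (\<Sum>s\<in>F. c s * s)" "finite F" "F \<subseteq> S" "\<forall>s\<in>F. c s \<in> zring l"
  using assms unfolding poly_ideal_def by blast

lemma poly_ideal_0 [simp]: "0 \<in> poly_ideal l S"
  using poly_idealI[of "{}" S] by simp

lemma poly_ideal_gen: "s \<in> S \<Longrightarrow> s \<in> poly_ideal l S"
  using poly_idealI[of "{s}" S "\<lambda>_. 1" l] by (simp add: zring_def)

lemma poly_ideal_add:
  assumes "f \<in> poly_ideal l S" "g \<in> poly_ideal l S"
  shows "f + g \<in> poly_ideal l S"
proof -
  obtain F c where f: "f = (\<Sum>s\<in>F. c s * s)" "finite F" "F \<subseteq> S" "\<forall>s\<in>F. c s \<in> zring l"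
    using assms(1) by (rule poly_idealE)
  obtain G d where g: "g = (\<Sum>s\<in>G. d s * s)" "finite G" "G \<subseteq> S" "\<forall>s\<in>G. d s \<in> zring l"
    using assms(2) by (rule poly_idealE)
  define e where "e s = (if s \<in> F then c s else 0) + (if s \<in> G then d s else 0)" for s
  have "(\<Sum>s\<in>F \<union> G. e s * s) =
      (\<Sum>s\<in>F \<union> G. (if s \<in> F then c s * s else 0) + (if s \<in> G then d s * s else 0))"
    unfolding e_def by (intro sum.cong) (simp_all add: distrib_right)
  also have "\<dots> =
      (\<Sum>s\<in>F \<union> G. if s \<in> F then c s * s else 0) + (\<Sum>s\<in>F \<union> G. if s \<in> G then d s * s else 0)"
    by (rule sum.distrib)
  also have "\<dots> = f + g"
    using f(1,2) g(1,2) by (simp add: sum.inter_restrict[symmetric] Int_absorb1)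
  finally have "f + g = (\<Sum>s\<in>F \<union> G. e s * s)" ..
  moreover have "e s \<in> zring l" for s
    unfolding e_def using f(4) g(4) by (simp add: zring_add)
  ultimately show ?thesis using f(2,3) g(2,3) poly_idealI[of "F \<union> G" S e] by simp
qed

lemma poly_ideal_mult:
  assumes "r \<in> zring l" "f \<in> poly_ideal l S"
  shows "r * f \<in> poly_ideal l S"
proof -
  obtain F c where f: "f = (\<Sum>s\<in>F. c s * s)" "finite F" "F \<subseteq> S" "\<forall>s\<in>F. c s \<in> zring l"
    using assms(2) by (rule poly_idealE)
  have "r * f = (\<Sum>s\<in>F. (r * c s) * s)"
    unfolding f(1) by (simp add: sum_distrib_left mult.assoc)
  then show ?thesis using f(2-4) assms(1) poly_idealI[of F S "\<lambda>s. r * c s"] by (simp add: zring_mult)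
qed

lemma poly_ideal_diff:
  assumes "f \<in> poly_ideal l S" "g \<in> poly_ideal l S"
  shows "f - g \<in> poly_ideal l S"
proof -
  have "- 1 \<in> zring l" by (simp add: zring_def)
  then have "(- 1) * g \<in> poly_ideal l S" using assms(2) by (rule poly_ideal_mult)
  with assms(1) show ?thesis using poly_ideal_add by fastforce
qed

lemma poly_ideal_induct [consumes 1, case_names gen zero add mult]:
  assumes "f \<in> poly_ideal l S"
    and gen: "\<And>s. s \<in> S \<Longrightarrow> P s"
    and zero: "P 0"
    and add: "\<And>f g. P f \<Longrightarrow> P g \<Longrightarrow> P (f + g)"
    and mult: "\<And>r f. r \<in> zring l \<Longrightarrow> P f \<Longrightarrow> P (r * f)"
  shows "P f"
proof -
  obtain F c where f: "f = (\<Sum>s\<in>F. c s * s)" "finite F" "F \<subseteq> S" "\<forall>s\<in>F. c s \<in> zring l"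
    using assms(1) by (rule poly_idealE)
  from f(2-4) show ?thesis unfolding f(1)
    by (induction F rule: finite_induct) (auto intro: zero add mult gen)
qed

lemma poly_ideal_subset_zring: "S \<subseteq> zring l \<Longrightarrow> poly_ideal l S \<subseteq> zring l"
  by (auto elim: poly_ideal_induct intro: zring_add zring_mult)

lemma poly_ideal_subsetI: "T \<subseteq> poly_ideal l S \<Longrightarrow> poly_ideal l T \<subseteq> poly_ideal l S"
  by (auto elim: poly_ideal_induct intro: poly_ideal_add poly_ideal_mult)

section \<open>Term orders and leading terms\<close>

locale term_ordering =
  fixes l :: nat and le :: "mon \<Rightarrow> mon \<Rightarrow> bool"
  assumes term_order: "term_order l le"
begin

lemma term_le_refl: "m \<in> mons l \<Longrightarrow> le m m"
  using term_order unfolding term_order_def by blast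

lemma term_le_antisym: "m \<in> mons l \<Longrightarrow> m' \<in> mons l \<Longrightarrow> le m m' \<Longrightarrow> le m' m \<Longrightarrow> m = m'"
  using term_order unfolding term_order_def by blast

lemma term_le_trans:
  "m \<in> mons l \<Longrightarrow> m' \<in> mons l \<Longrightarrow> m'' \<in> mons l \<Longrightarrow> le m m' \<Longrightarrow> le m' m'' \<Longrightarrow> le m m''"
  using term_order unfolding term_order_def by blast

lemma term_le_total: "m \<in> mons l \<Longrightarrow> m' \<in> mons l \<Longrightarrow> le m m' \<or> le m' m"
  using term_order unfolding term_order_def by blast

lemma zero_term_le: "m \<in> mons l \<Longrightarrow> le 0 m"
  using term_order unfolding term_order_def by blast

lemma term_le_add_left:
  "m \<in> mons l \<Longrightarrow> m' \<in> mons l \<Longrightarrow> t \<in> mons l \<Longrightarrow> le m m' \<Longrightarrow> le (t + m) (t + m')"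
  using term_order unfolding term_order_def by (metis add.commute)

lemma term_le_if_mon_dvd:
  assumes "m' \<in> mons l" "mon_dvd m m'"
  shows "le m m'"
proof -
  have "m \<in> mons l" "m' - m \<in> mons l"
    using assms by (auto intro: mon_dvd_mons mons_diff)
  then have "le (m + 0) (m + (m' - m))"
    by (intro term_le_add_left zero_term_le) simp_all
  then show ?thesis using mon_dvd_add_diff[OF assms(2)] by simp
qed

definition term_less :: "(mon \<times> mon) set" where
  "term_less = {(m', m). m' \<in> mons l \<and> m \<in> mons l \<and> le m' m \<and> m' \<noteq> m}"

(* By Dickson's lemma a descending chain contains a term dividing a later one, which then
   lies below it by compatibility with multiplication. *)
lemma wf_term_less: "wf term_less"
  unfolding wf_iff_no_infinite_down_chain
proof
  assume "\<exists>f. \<forall>i. (f (Suc i), f i) \<in> term_less"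
  then obtain f where f: "(f (Suc i), f i) \<in> term_less" for i by blast
  have mons: "f i \<in> mons l" for i
    using f[of i] unfolding term_less_def by simp
  have down: "le (f (Suc i)) (f i)" "f (Suc i) \<noteq> f i" for i
    using f[of i] unfolding term_less_def by auto
  have descending: "le (f j) (f i)" if "i \<le> j" for i j
    using that
  proof (induction j rule: dec_induct)
    case base
    then show ?case using term_le_refl[OF mons] .
  next
    case (step j)
    then show ?case using term_le_trans[OF mons mons mons] down(1)[of j] by blast
  qed
  obtain i j where ij: "i < j" "\<forall>v\<in>{..<l}. Poly_Mapping.lookup (f i) v \<le> Poly_Mapping.lookup (f j) v"
    by (rule dickson[of "{..<l}" "\<lambda>i. Poly_Mapping.lookup (f i)"]) simp
  have "mon_dvd (f i) (f j)"
    unfolding mon_dvd_def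
  proof
    fix v
    show "Poly_Mapping.lookup (f i) v \<le> Poly_Mapping.lookup (f j) v"
      using ij(2) lookup_mons[OF mons[of i], of v] by (cases "v < l") auto
  qed
  then have "le (f i) (f j)" using term_le_if_mon_dvd mons by blast
  moreover have "le (f j) (f (Suc i))" using descending ij(1) by simp
  ultimately have "le (f i) (f (Suc i))" using term_le_trans[OF mons mons mons] by blast
  then show False using term_le_antisym[OF mons mons] down by metis
qed

lemma finite_has_term_max:
  assumes "finite A" "A \<noteq> {}" "A \<subseteq> mons l"
  shows "\<exists>m\<in>A. \<forall>m'\<in>A. le m' m"
  using assms
proof (induction A rule: finite_ne_induct)
  case (singleton x)
  then show ?case using term_le_refl by simp
next
  case (insert x F)
  then obtain m where m: "m \<in> F" "\<forall>m'\<in>F. le m' m" by auto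
  have mons: "x \<in> mons l" "m \<in> mons l" "F \<subseteq> mons l" using insert.prems m(1) by auto
  show ?case
  proof (cases "le x m")
    case True
    with m show ?thesis by auto
  next
    case False
    then have "le m x" using term_le_total[OF mons(1,2)] by simp
    then have "\<forall>m'\<in>F. le m' x" using m(2) mons term_le_trans by blast
    then show ?thesis using term_le_refl[OF mons(1)] by auto
  qed
qed

lemma lt_eqI:
  assumes "f \<in> zring l" "m \<in> Poly_Mapping.keys f" "\<forall>m'\<in>Poly_Mapping.keys f. le m' m"
  shows "lt le f = m"
  unfolding lt_def
proof (rule the_equality)
  fix m' assume m': "m' \<in> Poly_Mapping.keys f \<and> (\<forall>m''\<in>Poly_Mapping.keys f. le m'' m')"
  have "Poly_Mapping.keys f \<subseteq> mons l" using assms(1) by (simp add: zring_def)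
  with m' assms(2,3) show "m' = m" using term_le_antisym by blast
qed (use assms in blast)

lemma
  assumes "f \<in> zring l" "f \<noteq> 0"
  shows lt_in_keys: "lt le f \<in> Poly_Mapping.keys f"
    and keys_le_lt: "\<And>m. m \<in> Poly_Mapping.keys f \<Longrightarrow> le m (lt le f)"
    and lt_in_mons: "lt le f \<in> mons l"
    and lc_nonzero: "lc le f \<noteq> 0"
proof -
  have keys: "finite (Poly_Mapping.keys f)" "Poly_Mapping.keys f \<noteq> {}" "Poly_Mapping.keys f \<subseteq> mons l"
    using assms unfolding zring_def by auto
  then obtain m where m: "m \<in> Poly_Mapping.keys f" "\<forall>m'\<in>Poly_Mapping.keys f. le m' m"
    using finite_has_term_max by blast
  with lt_eqI[OF assms(1) m] keys show "lt le f \<in> Poly_Mapping.keys f" "lt le f \<in> mons l"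
    "\<And>m. m \<in> Poly_Mapping.keys f \<Longrightarrow> le m (lt le f)"
    by auto
  then show "lc le f \<noteq> 0" unfolding lc_def by (simp add: in_keys_iff)
qed

lemma keys_single_mult_le:
  fixes g :: zpoly
  assumes "g \<in> zring l" "g \<noteq> 0" "t \<in> mons l" "x \<in> Poly_Mapping.keys (Poly_Mapping.single t c * g)"
  shows "le x (t + lt le g)"
proof -
  obtain y where y: "y \<in> Poly_Mapping.keys g" "x = t + y"
    using assms(4) keys_mult[of "Poly_Mapping.single t c" g] by (auto split: if_splits)
  have "y \<in> mons l" using y(1) assms(1) unfolding zring_def by auto
  then show ?thesis
    using y term_le_add_left[OF _ lt_in_mons[OF assms(1,2)] assms(3) keys_le_lt[OF assms(1,2)]] by blast
qed

lemma reduction_lt_less: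
  fixes f g :: zpoly
  assumes f: "f \<in> zring l" "f \<noteq> 0" and g: "g \<in> zring l" "g \<noteq> 0"
    and dvd: "mon_dvd (lt le g) (lt le f)" and r: "r * lc le g = lc le f"
    and h: "h = f - Poly_Mapping.single (lt le f - lt le g) r * g" "h \<noteq> 0"
  shows "(lt le h, lt le f) \<in> term_less"
proof -
  let ?t = "lt le f - lt le g"
  have t: "?t \<in> mons l" using mons_diff[OF lt_in_mons[OF f]] .
  have lt_f: "lt le f = ?t + lt le g"
    using mon_dvd_add_diff[OF dvd] by (simp add: add.commute)
  have "h \<in> zring l" unfolding h(1) by (intro zring_diff zring_mult zring_single f g t)
  note lt_h = lt_in_keys[OF this h(2)] lt_in_mons[OF this h(2)]
  have "Poly_Mapping.lookup (Poly_Mapping.single ?t r * g) (lt le f) = r * lc le g"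
    using lookup_single_mult_add[of ?t r g "lt le g"] lt_f by (simp add: lc_def)
  then have "Poly_Mapping.lookup h (lt le f) = 0"
    using r by (simp add: h(1) lookup_minus lc_def)
  then have "lt le h \<noteq> lt le f" using lt_h(1) by (auto simp: in_keys_iff)
  moreover have "le (lt le h) (lt le f)"
  proof -
    have "lt le h \<in> Poly_Mapping.keys f \<or> lt le h \<in> Poly_Mapping.keys (Poly_Mapping.single ?t r * g)"
      using lt_h(1) unfolding h(1) by (auto simp: in_keys_iff lookup_minus)
    then show ?thesis using keys_le_lt[OF f] keys_single_mult_le[OF g t] lt_f by auto
  qed
  ultimately show ?thesis unfolding term_less_def using lt_h(2) lt_in_mons[OF f] by simp
qed

lemma lm_dvd_nonzero:
  assumes "lm_dvd le g f" "f \<in> zring l" "f \<noteq> 0"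
  shows "g \<noteq> 0"
  using assms lc_nonzero unfolding lm_dvd_def lc_def by fastforce

context
  fixes S G :: "zpoly set" and d :: int
  assumes S: "S \<subseteq> zring l" and G: "G \<subseteq> poly_ideal l S"
    and strong: "\<And>f. f \<in> poly_ideal l S \<Longrightarrow> f \<noteq> 0 \<Longrightarrow> \<exists>g\<in>G. lm_dvd le g f"
    and coprime: "\<And>g. g \<in> G \<Longrightarrow> coprime d (lc le g)"
begin

(* Coprimality moves the factor d of LC(f) into the quotient, so the step subtracts d times
   an element of the ideal generated by G. *)
lemma divide_out_step:
  assumes f: "f \<in> poly_ideal l S" "f \<noteq> 0" "\<forall>x. d dvd Poly_Mapping.lookup f x"
  obtains f' r where "f' \<in> poly_ideal l S" "\<forall>x. d dvd Poly_Mapping.lookup f' x"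
    "r \<in> poly_ideal l G"
    "\<forall>x. Poly_Mapping.lookup f x = Poly_Mapping.lookup f' x + d * Poly_Mapping.lookup r x"
    "f' = 0 \<or> (lt le f', lt le f) \<in> term_less"
proof -
  have fz: "f \<in> zring l" using f(1) S poly_ideal_subset_zring by blast
  obtain g where g: "g \<in> G" "lm_dvd le g f" using strong f(1,2) by blast
  have gI: "g \<in> poly_ideal l S" using g(1) G by blast
  have gz: "g \<in> zring l" using gI S poly_ideal_subset_zring by blast
  have g0: "g \<noteq> 0" using lm_dvd_nonzero[OF g(2) fz f(2)] .
  have "d * lc le g dvd lc le f"
    using f(3) g(2) coprime[OF g(1)] unfolding lm_dvd_def lc_def by (simp add: divides_mult)
  then obtain q where q: "lc le f = d * q * lc le g"
    by (metis dvdE mult.commute mult.left_commute)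
  define t where "t = lt le f - lt le g"
  have t: "t \<in> mons l" unfolding t_def using mons_diff[OF lt_in_mons[OF fz f(2)]] .
  define r where "r = Poly_Mapping.single t q * g"
  define f' where "f' = f - Poly_Mapping.single t (d * q) * g"
  have "Poly_Mapping.single t (d * q) * g = Poly_Mapping.single 0 d * r"
    unfolding r_def by (simp add: mult_single mult.assoc[symmetric])
  then have lookup_f:
    "\<forall>x. Poly_Mapping.lookup f x = Poly_Mapping.lookup f' x + d * Poly_Mapping.lookup r x"
    by (simp add: f'_def lookup_minus lookup_single_zero_mult)
  show ?thesis
  proof (rule that[OF _ _ _ lookup_f])
    show "f' \<in> poly_ideal l S"
      unfolding f'_def by (intro poly_ideal_diff poly_ideal_mult zring_single t gI f(1))
    show "r \<in> poly_ideal l G"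
      unfolding r_def by (intro poly_ideal_mult zring_single t poly_ideal_gen g(1))
    show "\<forall>x. d dvd Poly_Mapping.lookup f' x"
      using f(3) lookup_f by (metis dvd_add_times_triv_right_iff mult.commute)
    show "f' = 0 \<or> (lt le f', lt le f) \<in> term_less"
      using reduction_lt_less[OF fz f(2) gz g0 _ _ f'_def[unfolded t_def]] g(2) q
      unfolding lm_dvd_def by auto
  qed
qed

lemma divide_out_by_strong_set:
  assumes "f \<in> poly_ideal l S" "\<forall>x. d dvd Poly_Mapping.lookup f x"
  shows "\<exists>h\<in>poly_ideal l G. \<forall>x. Poly_Mapping.lookup f x = d * Poly_Mapping.lookup h x"
  using wf_term_less assms
proof (induction "lt le f" arbitrary: f rule: wf_induct_rule)
  case less
  show ?case
  proof (cases "f = 0")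
    case True
    then show ?thesis by (intro bexI[of _ 0]) simp_all
  next
    case False
    obtain f' r where f': "f' \<in> poly_ideal l S" "\<forall>x. d dvd Poly_Mapping.lookup f' x"
      and r: "r \<in> poly_ideal l G"
        "\<forall>x. Poly_Mapping.lookup f x = Poly_Mapping.lookup f' x + d * Poly_Mapping.lookup r x"
      and smaller: "f' = 0 \<or> (lt le f', lt le f) \<in> term_less"
      by (rule divide_out_step[OF less.prems(1) False less.prems(2)])
    obtain h' where h': "h' \<in> poly_ideal l G"
      "\<forall>x. Poly_Mapping.lookup f' x = d * Poly_Mapping.lookup h' x"
    proof (cases "f' = 0")
      case True
      then show ?thesis using that[of 0] by simp
    next
      case False
      then show ?thesis using smaller less.hyps[OF _ f'] that by blast
    qed
    have "h' + r \<in> poly_ideal l G" using h'(1) r(1) by (rule poly_ideal_add)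
    moreover have "\<forall>x. Poly_Mapping.lookup f x = d * Poly_Mapping.lookup (h' + r) x"
      using r(2) h'(2) by (simp add: lookup_add distrib_left)
    ultimately show ?thesis by blast
  qed
qed

end
end

section \<open>Existence of minimal strong Groebner bases\<close>

locale polynomial_ideal = term_ordering +
  fixes S :: "zpoly set"
  assumes S_zring: "S \<subseteq> zring l"
begin

abbreviation I :: "zpoly set" where "I \<equiv> poly_ideal l S"

lemma I_zring: "f \<in> I \<Longrightarrow> f \<in> zring l"
  using poly_ideal_subset_zring[OF S_zring] by blast

definition leading_pair :: "int \<Rightarrow> mon \<Rightarrow> bool" where
  "leading_pair c m \<longleftrightarrow> (\<exists>f\<in>I. f \<noteq> 0 \<and> lt le f = m \<and> \<bar>lc le f\<bar> = c)"

definition minimal_pair :: "int \<Rightarrow> mon \<Rightarrow> bool" where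
  "minimal_pair c m \<longleftrightarrow> leading_pair c m \<and>
     (\<forall>c' m'. leading_pair c' m' \<and> c' dvd c \<and> mon_dvd m' m \<longrightarrow> c' = c \<and> m' = m)"

lemma leading_pair_pos_mons:
  assumes "leading_pair c m"
  shows "0 < c" "m \<in> mons l"
proof -
  obtain f where f: "f \<in> I" "f \<noteq> 0" "lt le f = m" "\<bar>lc le f\<bar> = c"
    using assms unfolding leading_pair_def by blast
  show "0 < c" using lc_nonzero[OF I_zring[OF f(1)] f(2)] f(4) by auto
  show "m \<in> mons l" using lt_in_mons[OF I_zring[OF f(1)] f(2)] f(3) by simp
qed

definition deg :: "mon \<Rightarrow> nat" where
  "deg m = (\<Sum>v<l. Poly_Mapping.lookup m v)"

lemma deg_mono: "mon_dvd m' m \<Longrightarrow> deg m' \<le> deg m"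
  unfolding deg_def mon_dvd_def by (intro sum_mono) auto

lemma deg_strict_mono:
  assumes "m \<in> mons l" "mon_dvd m' m" "m' \<noteq> m"
  shows "deg m' < deg m"
proof -
  have m': "m' \<in> mons l" using mon_dvd_mons assms(1,2) by blast
  obtain v where v: "Poly_Mapping.lookup m' v \<noteq> Poly_Mapping.lookup m v"
    using assms(3) poly_mapping_eqI by metis
  then have "v < l" using lookup_mons[OF assms(1), of v] lookup_mons[OF m', of v] by linarith
  moreover have "Poly_Mapping.lookup m' v < Poly_Mapping.lookup m v"
    using v assms(2) unfolding mon_dvd_def by (simp add: le_neq_implies_less)
  ultimately show ?thesis
    using assms(2) unfolding deg_def mon_dvd_def by (intro sum_strict_mono_ex1) auto
qed

(* Among the leading pairs dividing (c, m), one minimising nat c + deg m is minimal,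
   because a proper divisor has a strictly smaller measure. *)
lemma minimal_pair_below:
  assumes "leading_pair c m"
  obtains c' m' where "minimal_pair c' m'" "c' dvd c" "mon_dvd m' m"
proof -
  define below where "below = (\<lambda>(c', m'). leading_pair c' m' \<and> c' dvd c \<and> mon_dvd m' m)"
  obtain c0 m0 where "below (c0, m0)"
    and least: "\<And>q. below q \<Longrightarrow> nat c0 + deg m0 \<le> nat (fst q) + deg (snd q)"
    using ex_has_least_nat[of below "(c, m)" "\<lambda>q. nat (fst q) + deg (snd q)"] assms
    unfolding below_def by (auto simp: mon_dvd_refl)
  then have c0: "leading_pair c0 m0" "c0 dvd c" "mon_dvd m0 m" unfolding below_def by auto
  have "minimal_pair c0 m0"
    unfolding minimal_pair_def
  proof (intro conjI[OF c0(1)] allI impI)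
    fix c' m' assume c': "leading_pair c' m' \<and> c' dvd c0 \<and> mon_dvd m' m0"
    then have "below (c', m')" using c0 dvd_trans mon_dvd_trans unfolding below_def by auto
    then have le: "nat c0 + deg m0 \<le> nat c' + deg m'" using least[of "(c', m')"] by simp
    have pos: "0 < c'" "0 < c0" using leading_pair_pos_mons c' c0(1) by auto
    then have "c' \<le> c0" using c' zdvd_imp_le by simp
    moreover have "deg m' \<le> deg m0" using c' deg_mono by blast
    ultimately have "c' = c0" "deg m' = deg m0" using le pos by auto
    moreover have "m' = m0"
      using deg_strict_mono[OF leading_pair_pos_mons(2)[OF c0(1)], of m'] c' \<open>deg m' = deg m0\<close> by auto
    ultimately show "c' = c0 \<and> m' = m0" by simp
  qed
  with c0 that show ?thesis by blast
qed

lemma leading_pairE: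
  assumes "leading_pair c m"
  obtains f where "f \<in> I" "f \<in> zring l" "f \<noteq> 0" "lt le f = m" "\<bar>lc le f\<bar> = c"
  using assms I_zring unfolding leading_pair_def by blast

(* The witness is u x^(mj - mi) fi + w fj, where u LC(fi) + w LC(fj) = gcd. *)
lemma leading_pair_gcd:
  assumes i: "leading_pair ci mi" and j: "leading_pair cj mj" and dvd: "mon_dvd mi mj"
  shows "leading_pair (gcd ci cj) mj"
proof -
  obtain fi where fi: "fi \<in> I" "fi \<in> zring l" "fi \<noteq> 0" "lt le fi = mi" "\<bar>lc le fi\<bar> = ci"
    using i by (rule leading_pairE)
  obtain fj where fj: "fj \<in> I" "fj \<in> zring l" "fj \<noteq> 0" "lt le fj = mj" "\<bar>lc le fj\<bar> = cj"
    using j by (rule leading_pairE)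
  have "gcd (lc le fi) (lc le fj) = gcd ci cj"
    using fi(5) fj(5) gcd_abs1_int gcd_abs2_int by metis
  then obtain u w where uw: "u * lc le fi + w * lc le fj = gcd ci cj"
    using bezout_int[of "lc le fi" "lc le fj"] by auto
  define t where "t = mj - mi"
  have t: "t \<in> mons l" unfolding t_def using mons_diff[OF leading_pair_pos_mons(2)[OF j]] .
  have mj: "mj = t + mi" unfolding t_def using mon_dvd_add_diff[OF dvd] by (simp add: add.commute)
  define h where "h = Poly_Mapping.single t u * fi + Poly_Mapping.single 0 w * fj"
  have "h \<in> I" unfolding h_def
    by (intro poly_ideal_add poly_ideal_mult zring_single t zero_mons fi(1) fj(1))
  have lookup_h: "Poly_Mapping.lookup h mj = gcd ci cj"
    using uw fi(4) fj(4) unfolding h_def mj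
    by (simp add: lookup_add lookup_single_mult_add lookup_single_zero_mult lc_def)
  have "0 < gcd ci cj" using leading_pair_pos_mons(1)[OF i] by simp
  then have "h \<noteq> 0" "mj \<in> Poly_Mapping.keys h" using lookup_h by (auto simp: in_keys_iff)
  moreover have "le x mj" if "x \<in> Poly_Mapping.keys h" for x
  proof -
    have "x \<in> Poly_Mapping.keys (Poly_Mapping.single t u * fi) \<or>
        x \<in> Poly_Mapping.keys (Poly_Mapping.single 0 w * fj)"
      using that keys_add[of "Poly_Mapping.single t u * fi" "Poly_Mapping.single 0 w * fj"]
      unfolding h_def by blast
    then show ?thesis
      using keys_single_mult_le[OF fi(2,3) t] keys_single_mult_le[OF fj(2,3) zero_mons] fi(4) fj(4) mj
      by auto
  qed
  ultimately have "lt le h = mj" using lt_eqI[OF I_zring[OF \<open>h \<in> I\<close>]] by blast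
  then show ?thesis
    unfolding leading_pair_def using \<open>h \<in> I\<close> \<open>h \<noteq> 0\<close> lookup_h
    by (intro bexI[of _ h]) (simp_all add: lc_def)
qed

lemma minimal_pairD:
  "minimal_pair c m \<Longrightarrow> leading_pair c' m' \<Longrightarrow> c' dvd c \<Longrightarrow> mon_dvd m' m \<Longrightarrow> c' = c \<and> m' = m"
  unfolding minimal_pair_def by blast

(* Among infinitely many minimal pairs, Dickson's lemma finds (ci, mi), (cj, mj) with ci <= cj
   and mi dividing mj; testing the minimality of (cj, mj) against (gcd ci cj, mj) forces equality. *)
lemma finite_minimal_pairs: "finite {(c, m). minimal_pair c m}"
proof (rule ccontr)
  assume "infinite {(c, m). minimal_pair c m}"
  from infinite_countable_subset[OF this] obtain q :: "nat \<Rightarrow> int \<times> mon"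
    where q: "inj q" "range q \<subseteq> {(c, m). minimal_pair c m}"
    by (elim exE conjE)
  define s where "s i v = (if v = l then nat (fst (q i)) else Poly_Mapping.lookup (snd (q i)) v)" for i v
  obtain i j where ij: "i < j" "\<forall>v\<in>{..l}. s i v \<le> s j v"
    by (rule dickson[of "{..l}" s]) simp
  obtain ci mi cj mj where qij: "q i = (ci, mi)" "q j = (cj, mj)"
    using surj_pair by metis
  have "q i \<in> range q" "q j \<in> range q" by simp_all
  then have i: "minimal_pair ci mi" and j: "minimal_pair cj mj"
    using q(2) qij by auto
  have lp_i: "leading_pair ci mi" using i unfolding minimal_pair_def by blast
  have lp_j: "leading_pair cj mj" using j unfolding minimal_pair_def by blast
  have pos: "0 < ci" "0 < cj" using leading_pair_pos_mons(1) lp_i lp_j by blast+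
  have "ci \<le> cj" using ij(2)[rule_format, of l] pos unfolding s_def qij by simp
  have "mon_dvd mi mj"
    unfolding mon_dvd_def
  proof
    fix v
    show "Poly_Mapping.lookup mi v \<le> Poly_Mapping.lookup mj v"
    proof (cases "v < l")
      case True
      then show ?thesis using ij(2)[rule_format, of v] unfolding s_def qij by simp
    next
      case False
      then show ?thesis using lookup_mons[OF leading_pair_pos_mons(2)[OF lp_i], of v] by simp
    qed
  qed
  have "gcd ci cj = cj"
    using minimal_pairD[OF j leading_pair_gcd[OF lp_i lp_j \<open>mon_dvd mi mj\<close>] gcd_dvd2 mon_dvd_refl]
    by simp
  then have "cj \<le> ci" using pos by (metis gcd_dvd1 zdvd_imp_le)
  then have "ci = cj" using \<open>ci \<le> cj\<close> by simp
  then have "mi = mj" using minimal_pairD[OF j lp_i _ \<open>mon_dvd mi mj\<close>] by simp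
  then have "q i = q j" using qij \<open>ci = cj\<close> by simp
  then show False using q(1) ij(1) by (simp add: inj_eq)
qed

definition pair_rep :: "int \<Rightarrow> mon \<Rightarrow> zpoly" where
  "pair_rep c m = (SOME f. f \<in> I \<and> f \<noteq> 0 \<and> lt le f = m \<and> \<bar>lc le f\<bar> = c)"

lemma pair_rep:
  assumes "leading_pair c m"
  shows "pair_rep c m \<in> I" "pair_rep c m \<noteq> 0" "lt le (pair_rep c m) = m" "\<bar>lc le (pair_rep c m)\<bar> = c"
proof -
  have "\<exists>f. f \<in> I \<and> f \<noteq> 0 \<and> lt le f = m \<and> \<bar>lc le f\<bar> = c"
    using assms unfolding leading_pair_def by blast
  from someI_ex[OF this] show "pair_rep c m \<in> I" "pair_rep c m \<noteq> 0" "lt le (pair_rep c m) = m"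
    "\<bar>lc le (pair_rep c m)\<bar> = c"
    unfolding pair_rep_def by blast+
qed

definition gb :: "zpoly set" where
  "gb = (\<lambda>(c, m). pair_rep c m) ` {(c, m). minimal_pair c m}"

lemma gbE:
  assumes "g \<in> gb"
  obtains c m where "minimal_pair c m" "leading_pair c m" "g = pair_rep c m"
  using assms unfolding gb_def minimal_pair_def by auto

lemma lm_dvd_pair_rep:
  assumes "leading_pair c m" "leading_pair c' m'"
  shows "lm_dvd le (pair_rep c m) (pair_rep c' m') \<longleftrightarrow> c dvd c' \<and> mon_dvd m m'"
  using pair_rep[OF assms(1)] pair_rep[OF assms(2)] unfolding lm_dvd_def
  by (metis abs_dvd_iff dvd_abs_iff)

lemma gb_strong:
  assumes "f \<in> I" "f \<noteq> 0"
  shows "\<exists>g\<in>gb. lm_dvd le g f"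
proof -
  have "leading_pair \<bar>lc le f\<bar> (lt le f)" unfolding leading_pair_def using assms by blast
  then obtain c m where cm: "minimal_pair c m" "c dvd \<bar>lc le f\<bar>" "mon_dvd m (lt le f)"
    by (rule minimal_pair_below)
  then have "leading_pair c m" unfolding minimal_pair_def by blast
  then have "lm_dvd le (pair_rep c m) f"
    using pair_rep(3,4) cm(2,3) unfolding lm_dvd_def by (metis abs_dvd_iff dvd_abs_iff)
  moreover have "pair_rep c m \<in> gb" unfolding gb_def using cm(1) by force
  ultimately show ?thesis by blast
qed

lemma min_strong_GB_gb: "min_strong_GB l le I gb"
  unfolding min_strong_GB_def
proof (intro conjI ballI impI)
  show "finite gb" unfolding gb_def using finite_minimal_pairs by simp
  show gb_I: "gb \<subseteq> I - {0}" using pair_rep(1,2) by (auto elim: gbE)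
  show "poly_ideal l gb = I"
  proof
    show "poly_ideal l gb \<subseteq> I" using gb_I by (intro poly_ideal_subsetI) blast
    show "I \<subseteq> poly_ideal l gb"
    proof
      fix f assume "f \<in> I"
      then obtain h where "h \<in> poly_ideal l gb" "\<forall>x. Poly_Mapping.lookup f x = 1 * Poly_Mapping.lookup h x"
        using divide_out_by_strong_set[OF S_zring, of gb 1 f] gb_I gb_strong by auto
      then show "f \<in> poly_ideal l gb" using poly_mapping_eqI[of f h] by simp
    qed
  qed
  show "\<exists>g\<in>gb. lm_dvd le g f" if "f \<in> I" "f \<noteq> 0" for f using gb_strong that .
  show "\<not> lm_dvd le g g'" if g: "g \<in> gb" "g' \<in> gb" "g \<noteq> g'" for g g'
  proof -
    obtain c m where cm: "minimal_pair c m" "leading_pair c m" "g = pair_rep c m"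
      using g(1) by (rule gbE)
    obtain c' m' where cm': "minimal_pair c' m'" "leading_pair c' m'" "g' = pair_rep c' m'"
      using g(2) by (rule gbE)
    show ?thesis
      using minimal_pairD[OF cm'(1) cm(2)] g(3) cm(3) cm'(3) lm_dvd_pair_rep[OF cm(2) cm'(2)] by auto
  qed
qed

lemma lucky_divide_out:
  fixes p :: int
  assumes "lucky l le I p" "prime p" "f \<in> I" "\<forall>x. p dvd Poly_Mapping.lookup f x"
  shows "\<exists>h\<in>I. \<forall>x. Poly_Mapping.lookup f x = p * Poly_Mapping.lookup h x"
proof -
  have "coprime p (lc le g)" if "g \<in> gb" for g
    using assms(1,2) min_strong_GB_gb that unfolding lucky_def by (simp add: prime_imp_coprime)
  then show ?thesis
    using divide_out_by_strong_set[OF S_zring _ gb_strong _ assms(3,4)] min_strong_GB_gb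
    unfolding min_strong_GB_def by auto
qed

end

section \<open>Ideals generated by two linear forms\<close>

lemma single_one_eq_iff: "Poly_Mapping.single k (1::nat) = Poly_Mapping.single k' 1 \<longleftrightarrow> k = k'"
  by (metis lookup_single_eq lookup_single_not_eq zero_neq_one)

lemma lookup_lin_form_eq:
  "Poly_Mapping.lookup (lin_form l a) m = (\<Sum>k<l. if m = Poly_Mapping.single k 1 then a k else 0)"
  unfolding lin_form_def lookup_sum by (intro sum.cong) (auto simp: lookup_single when_def)

lemma lookup_lin_form: "k < l \<Longrightarrow> Poly_Mapping.lookup (lin_form l a) (Poly_Mapping.single k 1) = a k"
  unfolding lookup_lin_form_eq single_one_eq_iff by simp

lemma lookup_lin_form_nonlinear:
  "(\<And>k. k < l \<Longrightarrow> m \<noteq> Poly_Mapping.single k 1) \<Longrightarrow> Poly_Mapping.lookup (lin_form l a) m = 0"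
  unfolding lookup_lin_form_eq by (intro sum.neutral) auto

lemma lin_form_zring: "lin_form l a \<in> zring l"
  unfolding lin_form_def by (intro zring_sum zring_single) (simp add: mons_def)

lemma linear_coeffs_pair_ideal:
  assumes "h \<in> poly_ideal l {lin_form l a, lin_form l b}"
  obtains X Y where "\<forall>k<l. Poly_Mapping.lookup h (Poly_Mapping.single k 1) = X * a k + Y * b k"
proof -
  let ?coeffs = "\<lambda>h X Y. \<forall>k<l. Poly_Mapping.lookup h (Poly_Mapping.single k 1) = X * a k + Y * b k"
  (* The vanishing constant term makes the linear part of r * f depend only on that of f. *)
  have "Poly_Mapping.lookup h 0 = 0 \<and> (\<exists>X Y. ?coeffs h X Y)"
    using assms
  proof (induction rule: poly_ideal_induct)
    case (gen s)
    have "Poly_Mapping.lookup s 0 = 0"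
      using gen single_one_neq_zero by (auto intro!: lookup_lin_form_nonlinear simp del: One_nat_def)
    moreover have "?coeffs s 1 0 \<or> ?coeffs s 0 1"
      using gen lookup_lin_form by (auto simp del: One_nat_def)
    ultimately show ?case by blast
  next
    case zero
    show ?case by (intro conjI exI[of _ "0::int"]) simp_all
  next
    case (add f g)
    then obtain X Y X' Y' where "?coeffs f X Y" "?coeffs g X' Y'" by blast
    then have "?coeffs (f + g) (X + X') (Y + Y')" by (simp add: lookup_add algebra_simps)
    with add show ?case by (auto simp: lookup_add)
  next
    case (mult r f)
    then obtain X Y where f0: "Poly_Mapping.lookup f 0 = 0" and "?coeffs f X Y" by blast
    then have "?coeffs (r * f) (Poly_Mapping.lookup r 0 * X) (Poly_Mapping.lookup r 0 * Y)"
      by (simp del: One_nat_def add: lookup_mult_single_one distrib_left mult.assoc)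
    with f0 show ?case by (auto simp: lookup_mult_zero)
  qed
  with that show ?thesis by blast
qed

(* At a lucky prime, alpha - beta alpha' is p times an element of the ideal, whose linear part
   is an integer combination X alpha + Y alpha'. *)
lemma proportional_if_lucky:
  fixes p \<beta> :: int
  assumes "term_order l le" "prime p"
    and lucky: "lucky l le (poly_ideal l {lin_form l a, lin_form l b}) p"
    and cong: "\<forall>k<l. a k mod p = (\<beta> * b k) mod p"
  obtains u v where "\<not> p dvd u" "\<forall>k<l. u * a k = v * b k"
proof -
  interpret polynomial_ideal l le "{lin_form l a, lin_form l b}"
    using assms(1) lin_form_zring by unfold_locales auto
  define f where "f = lin_form l a - Poly_Mapping.single 0 \<beta> * lin_form l b"
  have "f \<in> I"
    unfolding f_def by (intro poly_ideal_diff poly_ideal_mult zring_single zero_mons poly_ideal_gen) auto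
  have lookup_f: "Poly_Mapping.lookup f x =
      Poly_Mapping.lookup (lin_form l a) x - \<beta> * Poly_Mapping.lookup (lin_form l b) x" for x
    by (simp add: f_def lookup_minus lookup_single_zero_mult)
  have "p dvd Poly_Mapping.lookup f x" for x
  proof (cases "\<exists>k<l. x = Poly_Mapping.single k 1")
    case True
    then obtain k where "k < l" "x = Poly_Mapping.single k 1" by blast
    then show ?thesis
      using cong lookup_lin_form unfolding lookup_f by (simp add: mod_eq_dvd_iff del: One_nat_def)
  next
    case False
    then show ?thesis unfolding lookup_f by (simp add: lookup_lin_form_nonlinear del: One_nat_def)
  qed
  then obtain h where "h \<in> I" and h: "\<forall>x. Poly_Mapping.lookup f x = p * Poly_Mapping.lookup h x"
    using lucky_divide_out[OF lucky assms(2) \<open>f \<in> I\<close>] by blast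
  from \<open>h \<in> I\<close> obtain X Y
    where XY: "\<forall>k<l. Poly_Mapping.lookup h (Poly_Mapping.single k 1) = X * a k + Y * b k"
    by (rule linear_coeffs_pair_ideal)
  have "(1 - p * X) * a k = (\<beta> + p * Y) * b k" if "k < l" for k
    using h[rule_format, of "Poly_Mapping.single k 1"] XY that lookup_f lookup_lin_form[OF that]
    by (simp add: algebra_simps del: One_nat_def)
  moreover have "\<not> p dvd 1 - p * X"
  proof
    assume "p dvd 1 - p * X"
    then have "p dvd (1 - p * X) + p * X" by (intro dvd_add) simp_all
    then have "p dvd 1" by simp
    then show False using assms(2) not_prime_unit by blast
  qed
  ultimately show ?thesis using that by blast
qed

lemma hyperplane_eq_if_proportional:
  fixes u v :: int
  assumes "u \<noteq> 0" "v \<noteq> 0" "\<forall>k<l. u * a k = v * b k"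
  shows "hyperplane l a = hyperplane l b"
proof -
  have coeffs: "of_int u * of_int (a k) = (of_int v * of_int (b k) :: rat)" if "k < l" for k
    using assms(3) that by (metis of_int_mult)
  have scaled:
    "of_int u * (\<Sum>k<l. of_int (a k) * x k) = of_int v * (\<Sum>k<l. of_int (b k) * (x k :: rat))" for x
  proof -
    have "of_int u * (\<Sum>k<l. of_int (a k) * x k) = (\<Sum>k<l. of_int u * of_int (a k) * x k)"
      by (simp add: sum_distrib_left mult.assoc)
    also have "\<dots> = (\<Sum>k<l. of_int v * of_int (b k) * x k)"
      by (intro sum.cong) (simp_all add: coeffs)
    also have "\<dots> = of_int v * (\<Sum>k<l. of_int (b k) * x k)"
      by (simp add: sum_distrib_left mult.assoc)
    finally show ?thesis .
  qed
  have "(\<Sum>k<l. of_int (a k) * x k) = 0 \<longleftrightarrow> (\<Sum>k<l. of_int (b k) * (x k :: rat)) = 0" for x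
    using scaled[of x] assms(1,2) by auto
  then show ?thesis unfolding hyperplane_def by simp
qed

theorem lemma6p1:
  fixes l n :: nat and \<alpha> :: "nat \<Rightarrow> nat \<Rightarrow> int"
    and le :: "mon \<Rightarrow> mon \<Rightarrow> bool" and p :: int and i j :: nat
  assumes nonzero: "\<And>r. r \<in> {1..n} \<Longrightarrow> \<exists>k<l. \<alpha> r k \<noteq> 0"
    and supp: "\<And>r k. r \<in> {1..n} \<Longrightarrow> k \<ge> l \<Longrightarrow> \<alpha> r k = 0"
    and primitive: "\<And>r q. r \<in> {1..n} \<Longrightarrow> prime q \<Longrightarrow> \<exists>k<l. \<not> q dvd \<alpha> r k"
    and distinct: "\<And>r s. r \<in> {1..n} \<Longrightarrow> s \<in> {1..n} \<Longrightarrow> r \<noteq> s \<Longrightarrow>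
                      hyperplane l (\<alpha> r) \<noteq> hyperplane l (\<alpha> s)"
    and essential: "\<And>x. (\<forall>k\<ge>l. x k = 0) \<Longrightarrow> (\<forall>r\<in>{1..n}. x \<in> hyperplane l (\<alpha> r)) \<Longrightarrow> x = (\<lambda>_. 0)"
    and sigma: "term_order l le"
    and p: "prime p"
    and ij: "1 \<le> i" "i < j" "j \<le> n"
    and red: "\<exists>\<beta>::int. \<not> p dvd \<beta> \<and> (\<forall>k<l. \<alpha> i k mod p = (\<beta> * \<alpha> j k) mod p)"
  shows "\<not> lucky l le (poly_ideal l {lin_form l (\<alpha> i), lin_form l (\<alpha> j)}) p"
proof
  assume lucky: "lucky l le (poly_ideal l {lin_form l (\<alpha> i), lin_form l (\<alpha> j)}) p"
  obtain \<beta> where "\<forall>k<l. \<alpha> i k mod p = (\<beta> * \<alpha> j k) mod p" using red by blast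
  then obtain u v where u: "\<not> p dvd u" and uv: "\<forall>k<l. u * \<alpha> i k = v * \<alpha> j k"
    using proportional_if_lucky[OF sigma p lucky] by blast
  have i: "i \<in> {1..n}" and j: "j \<in> {1..n}" using ij by auto
  have "u \<noteq> 0" using u by auto
  moreover have "v \<noteq> 0"
  proof
    assume "v = 0"
    obtain k where "k < l" "\<alpha> i k \<noteq> 0" using nonzero[OF i] by blast
    with uv \<open>v = 0\<close> \<open>u \<noteq> 0\<close> show False by simp
  qed
  ultimately have "hyperplane l (\<alpha> i) = hyperplane l (\<alpha> j)"
    using uv by (rule hyperplane_eq_if_proportional)
  with distinct[OF i j] ij show False by simp
qed

end
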